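(* Let $G$ be a graph whose $\operatorname{IR}$-graph $H=G(\operatorname{IR})$ is connected, and let $k\geq 3$. If $G$ has an $\operatorname{IR}(G)$-set $X$ containing $k$ vertices each of positive degree in $G[X]$, or containing $k$ vertices each having an $X$-external private neighbour, then $\operatorname{diam}(H)\geq k$.
   Context: All graphs are finite and simple. For $G=(V,E)$, $D\subseteq V$, $v\in D$: $\operatorname{PN}(v,D)=N[v]-N[D-\{v\}]$ and $\operatorname{EPN}(v,D)=\operatorname{PN}(v,D)-D$; elements of $\operatorname{EPN}(v,D)$ are the $D$-external private neighbours of $v$. $D$ is irredundant if $\operatorname{PN}(v,D)\neq\varnothing$ for all $v\in D$; $\operatorname{IR}(G)$ is the maximum size of an irredundant set; an $\operatorname{IR}(G)$-set is an irredundant set of that size. $G(\operatorname{IR})$ has the $\operatorname{IR}(G)$-sets as vertices, with $D\sim D'$ iff there exist $u\in D$, $v\in D'$ with $uv\in E(G)$ and $D'=(D-\{u\})\cup\{v\}$. *)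

theory Defs
  imports Main
begin

definition simple_graph :: "'a set \<Rightarrow> ('a \<Rightarrow> 'a \<Rightarrow> bool) \<Rightarrow> bool" where
  "simple_graph V E \<longleftrightarrow> finite V \<and> (\<forall>x y. E x y \<longrightarrow> E y x)
     \<and> (\<forall>x. \<not> E x x) \<and> (\<forall>x y. E x y \<longrightarrow> x \<in> V \<and> y \<in> V)"

definition cnbhd :: "'a set \<Rightarrow> ('a \<Rightarrow> 'a \<Rightarrow> bool) \<Rightarrow> 'a \<Rightarrow> 'a set" where
  "cnbhd V E v = insert v {u \<in> V. E v u}"

definition cnbhd_set :: "'a set \<Rightarrow> ('a \<Rightarrow> 'a \<Rightarrow> bool) \<Rightarrow> 'a set \<Rightarrow> 'a set" where
  "cnbhd_set V E S = (\<Union>v\<in>S. cnbhd V E v)"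

definition PN :: "'a set \<Rightarrow> ('a \<Rightarrow> 'a \<Rightarrow> bool) \<Rightarrow> 'a \<Rightarrow> 'a set \<Rightarrow> 'a set" where
  "PN V E v D = cnbhd V E v - cnbhd_set V E (D - {v})"

definition EPN :: "'a set \<Rightarrow> ('a \<Rightarrow> 'a \<Rightarrow> bool) \<Rightarrow> 'a \<Rightarrow> 'a set \<Rightarrow> 'a set" where
  "EPN V E v D = PN V E v D - D"

definition irredundant :: "'a set \<Rightarrow> ('a \<Rightarrow> 'a \<Rightarrow> bool) \<Rightarrow> 'a set \<Rightarrow> bool" where
  "irredundant V E D \<longleftrightarrow> D \<subseteq> V \<and> (\<forall>v\<in>D. PN V E v D \<noteq> {})"

definition IR :: "'a set \<Rightarrow> ('a \<Rightarrow> 'a \<Rightarrow> bool) \<Rightarrow> nat" where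
  "IR V E = Max {card D | D. irredundant V E D}"

definition IR_set :: "'a set \<Rightarrow> ('a \<Rightarrow> 'a \<Rightarrow> bool) \<Rightarrow> 'a set \<Rightarrow> bool" where
  "IR_set V E D \<longleftrightarrow> irredundant V E D \<and> card D = IR V E"

definition IR_graph_vertices :: "'a set \<Rightarrow> ('a \<Rightarrow> 'a \<Rightarrow> bool) \<Rightarrow> 'a set set" where
  "IR_graph_vertices V E = {D. IR_set V E D}"

definition IR_graph_adj :: "('a \<Rightarrow> 'a \<Rightarrow> bool) \<Rightarrow> 'a set \<Rightarrow> 'a set \<Rightarrow> bool" where
  "IR_graph_adj E D D' \<longleftrightarrow> (\<exists>u\<in>D. \<exists>v\<in>D'. E u v \<and> D' = (D - {u}) \<union> {v})"

definition is_walk :: "'b set \<Rightarrow> ('b \<Rightarrow> 'b \<Rightarrow> bool) \<Rightarrow> 'b list \<Rightarrow> bool" where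
  "is_walk W R xs \<longleftrightarrow> xs \<noteq> [] \<and> set xs \<subseteq> W \<and> (\<forall>i. Suc i < length xs \<longrightarrow> R (xs ! i) (xs ! Suc i))"

definition walk_between :: "'b set \<Rightarrow> ('b \<Rightarrow> 'b \<Rightarrow> bool) \<Rightarrow> 'b \<Rightarrow> 'b \<Rightarrow> nat \<Rightarrow> bool" where
  "walk_between W R x y n \<longleftrightarrow> (\<exists>xs. is_walk W R xs \<and> hd xs = x \<and> last xs = y \<and> length xs = Suc n)"

definition graph_connected :: "'b set \<Rightarrow> ('b \<Rightarrow> 'b \<Rightarrow> bool) \<Rightarrow> bool" where
  "graph_connected W R \<longleftrightarrow> (\<forall>x\<in>W. \<forall>y\<in>W. \<exists>n. walk_between W R x y n)"

definition graph_dist :: "'b set \<Rightarrow> ('b \<Rightarrow> 'b \<Rightarrow> bool) \<Rightarrow> 'b \<Rightarrow> 'b \<Rightarrow> nat" where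
  "graph_dist W R x y = (LEAST n. walk_between W R x y n)"

definition graph_diam :: "'b set \<Rightarrow> ('b \<Rightarrow> 'b \<Rightarrow> bool) \<Rightarrow> nat" where
  "graph_diam W R = Max {graph_dist W R x y | x y. x \<in> W \<and> y \<in> W}"

end

theory Submission
  imports Defs
begin

text \<open>
A vertex of an IR-set X with a neighbour in X has no private neighbour inside X, so it has an
X-external one. Replacing every vertex of X that has an X-external private neighbour by such a
neighbour yields a set Y of the same size, and Y is irredundant: the remaining vertices of X are
isolated in G[X] and remain their own private neighbours, while every new vertex keeps its old
owner as a private neighbour. An edge of G(IR) exchanges a single vertex, so the distance from X
to Y is at least the number of replaced vertices.
\<close>

lemma IR_graph_adj_Diff_subset:
  assumes "IR_graph_adj E D D'"
  obtains u where "D - D' \<subseteq> {u}"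
  using assms unfolding IR_graph_adj_def by blast

lemma walk_IR_graph_adj_card_Diff_less:
  assumes "is_walk W (IR_graph_adj E) xs"
  shows "finite (hd xs - last xs) \<and> card (hd xs - last xs) < length xs"
  using assms
proof (induction xs)
  case Nil
  then show ?case by (simp add: is_walk_def)
next
  case (Cons D ys)
  show ?case
  proof (cases "ys = []")
    case True
    then show ?thesis by simp
  next
    case False
    have "is_walk W (IR_graph_adj E) ys"
      using Cons.prems False unfolding is_walk_def
      by (metis Suc_less_eq insert_subset length_Cons list.simps(15) nth_Cons_Suc)
    with Cons.IH have IH: "finite (hd ys - last ys)" "card (hd ys - last ys) < length ys"
      by auto
    have "IR_graph_adj E D (hd ys)"
      using Cons.prems False unfolding is_walk_def
      by (metis hd_conv_nth length_Cons length_greater_0_conv nth_Cons_0 nth_Cons_Suc Suc_mono)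
    then obtain u where u: "D - hd ys \<subseteq> {u}" by (rule IR_graph_adj_Diff_subset)
    have fin_step: "finite (D - hd ys)"
      using u finite_subset by blast
    have card_step: "card (D - hd ys) \<le> 1"
      using card_mono[OF _ u] by simp
    have sub: "D - last ys \<subseteq> (D - hd ys) \<union> (hd ys - last ys)" by blast
    have "finite (D - last ys)"
      using finite_subset[OF sub] fin_step IH(1) by blast
    moreover have "card (D - last ys) \<le> card (D - hd ys) + card (hd ys - last ys)"
      using card_mono[OF _ sub] card_Un_le[of "D - hd ys" "hd ys - last ys"] fin_step IH(1)
      by (meson finite_UnI le_trans)
    ultimately show ?thesis
      using card_step IH(2) False by simp
  qed
qed

lemma card_Diff_le_graph_dist:
  assumes "graph_connected W (IR_graph_adj E)" "D \<in> W" "D' \<in> W"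
  shows "card (D - D') \<le> graph_dist W (IR_graph_adj E) D D'"
proof -
  obtain n where "walk_between W (IR_graph_adj E) D D' n"
    using assms unfolding graph_connected_def by blast
  then have "walk_between W (IR_graph_adj E) D D' (graph_dist W (IR_graph_adj E) D D')"
    unfolding graph_dist_def by (rule LeastI)
  then show ?thesis
    unfolding walk_between_def using walk_IR_graph_adj_card_Diff_less by fastforce
qed

lemma graph_dist_le_graph_diam:
  assumes "finite W" "x \<in> W" "y \<in> W"
  shows "graph_dist W R x y \<le> graph_diam W R"
proof -
  have "{graph_dist W R x y | x y. x \<in> W \<and> y \<in> W} = (\<lambda>(x, y). graph_dist W R x y) ` (W \<times> W)"
    by auto
  then have "finite {graph_dist W R x y | x y. x \<in> W \<and> y \<in> W}"
    using assms(1) by simp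
  then show ?thesis
    unfolding graph_diam_def by (rule Max_ge) (use assms in blast)
qed

lemma finite_IR_graph_vertices:
  assumes "finite V"
  shows "finite (IR_graph_vertices V E)"
proof -
  have "IR_graph_vertices V E \<subseteq> Pow V"
    unfolding IR_graph_vertices_def IR_set_def irredundant_def by auto
  then show ?thesis
    using assms finite_subset by blast
qed

lemma mem_cnbhd_iff: "u \<in> cnbhd V E v \<longleftrightarrow> u = v \<or> u \<in> V \<and> E v u"
  unfolding cnbhd_def by blast

lemma mem_PN_iff:
  "w \<in> PN V E v D \<longleftrightarrow> w \<in> cnbhd V E v \<and> (\<forall>y \<in> D - {v}. w \<notin> cnbhd V E y)"
  unfolding PN_def cnbhd_set_def by blast

lemma mem_EPN_iff:
  "w \<in> EPN V E v X \<longleftrightarrow> w \<in> cnbhd V E v \<and> w \<notin> X \<and> (\<forall>y \<in> X - {v}. w \<notin> cnbhd V E y)"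
  unfolding EPN_def Diff_iff mem_PN_iff by blast

lemma EPN_disjoint:
  assumes "v \<in> X" "v \<noteq> w"
  shows "EPN V E v X \<inter> EPN V E w X = {}"
  using assms by (auto simp: mem_EPN_iff)

lemma finite_if_irredundant:
  assumes "simple_graph V E" "irredundant V E X"
  shows "finite X"
  using assms finite_subset unfolding simple_graph_def irredundant_def by blast

lemma EPN_nonempty_if_adjacent:
  assumes G: "simple_graph V E" and X: "irredundant V E X"
    and "v \<in> X" "u \<in> X" "E v u"
  shows "EPN V E v X \<noteq> {}"
proof -
  have "u \<noteq> v" "v \<in> cnbhd V E u"
    using G \<open>E v u\<close> unfolding simple_graph_def cnbhd_def by auto
  then have "v \<notin> PN V E v X"
    using \<open>u \<in> X\<close> unfolding PN_def cnbhd_set_def by blast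
  moreover have "x \<notin> PN V E v X" if "x \<in> X" "x \<noteq> v" for x
    using that unfolding PN_def cnbhd_set_def cnbhd_def by blast
  ultimately have "PN V E v X \<inter> X = {}" by blast
  moreover have "PN V E v X \<noteq> {}"
    using X \<open>v \<in> X\<close> unfolding irredundant_def by blast
  ultimately show ?thesis
    unfolding EPN_def by blast
qed

lemma EPN_adjacent:
  assumes "v \<in> X" "w \<in> EPN V E v X"
  shows "E v w" "w \<in> V"
proof -
  have "w \<in> cnbhd V E v" "w \<noteq> v"
    using assms by (auto simp: mem_EPN_iff)
  then show "E v w" "w \<in> V"
    unfolding cnbhd_def by auto
qed

lemma EPN_not_adjacent:
  assumes "simple_graph V E" "w \<in> EPN V E v X" "y \<in> X" "y \<noteq> v"
  shows "\<not> E w y"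
proof
  assume "E w y"
  then have "E y w" "w \<in> V"
    using assms(1) unfolding simple_graph_def by blast+
  then have "w \<in> cnbhd V E y"
    unfolding cnbhd_def by blast
  then show False
    using assms(2-4) by (auto simp: mem_EPN_iff)
qed

lemma card_swap_EPN:
  assumes "finite X" "T \<subseteq> X" "\<And>v. v \<in> T \<Longrightarrow> f v \<in> EPN V E v X"
  shows "card ((X - T) \<union> f ` T) = card X"
proof -
  have "inj_on f T"
  proof (rule inj_onI, rule ccontr)
    fix v w assume "v \<in> T" "w \<in> T" "f v = f w" "v \<noteq> w"
    then have "f v \<in> EPN V E v X \<inter> EPN V E w X"
      using assms(3)[of v] assms(3)[of w] by simp
    moreover have "v \<in> X"
      using \<open>v \<in> T\<close> assms(2) by blast
    ultimately show False
      using EPN_disjoint[of v X w V E] \<open>v \<noteq> w\<close> by blast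
  qed
  have "f v \<notin> X" if "v \<in> T" for v
    using assms(3)[OF that] by (simp add: mem_EPN_iff)
  then have "(X - T) \<inter> f ` T = {}"
    by blast
  moreover have "finite T"
    using assms(1,2) finite_subset by blast
  ultimately have "card ((X - T) \<union> f ` T) = card (X - T) + card (f ` T)"
    using assms(1) by (simp add: card_Un_disjoint)
  also have "\<dots> = card (X - T) + card (X \<inter> T)"
    using card_image[OF \<open>inj_on f T\<close>] assms(2) by (simp add: Int_absorb1)
  also have "\<dots> = card X"
    using card_Int_Diff[OF assms(1), of T] by simp
  finally show ?thesis .
qed

lemma irredundant_swap_EPN:
  assumes G: "simple_graph V E" and X: "irredundant V E X" and "T \<subseteq> X"
    and f: "\<And>v. v \<in> T \<Longrightarrow> f v \<in> EPN V E v X"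
    and isolated: "\<And>v u. v \<in> X - T \<Longrightarrow> u \<in> X \<Longrightarrow> \<not> E v u"
  shows "irredundant V E ((X - T) \<union> f ` T)" (is "irredundant V E ?Y")
  unfolding irredundant_def
proof (intro conjI ballI)
  have sym: "\<And>x y. E x y \<Longrightarrow> E y x"
    using G unfolding simple_graph_def by blast
  have fX: "f v \<notin> X" if "v \<in> T" for v
    using f[OF that] by (simp add: mem_EPN_iff)
  have fE: "E v (f v)" "f v \<in> V" if "v \<in> T" for v
    using EPN_adjacent[OF _ f[OF that]] that \<open>T \<subseteq> X\<close> by auto
  have f_not_adj: "\<not> E (f v) y" if "v \<in> T" "y \<in> X" "y \<noteq> v" for v y
    using EPN_not_adjacent[OF G f[OF that(1)] that(2,3)] .
  show "?Y \<subseteq> V"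
    using X fE(2) unfolding irredundant_def by auto
  fix z assume "z \<in> ?Y"
  then consider (kept) "z \<in> X - T" | (new) v where "v \<in> T" "z = f v" by blast
  then show "PN V E z ?Y \<noteq> {}"
  proof cases
    case kept
    have "z \<notin> cnbhd V E y" if "y \<in> ?Y - {z}" for y
    proof -
      from that consider "y \<in> X - T" "y \<noteq> z" | w where "w \<in> T" "y = f w" by blast
      then show ?thesis
      proof cases
        case 1
        then show ?thesis
          using isolated[of z y] kept sym by (auto simp: mem_cnbhd_iff)
      next
        case 2
        then show ?thesis
          using fX[of w] f_not_adj[of w z] kept by (auto simp: mem_cnbhd_iff)
      qed
    qed
    then have "z \<in> PN V E z ?Y"
      by (simp add: mem_PN_iff mem_cnbhd_iff)
    then show ?thesis by blast
  next
    case new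
    have "v \<in> X" using new \<open>T \<subseteq> X\<close> by blast
    have "v \<notin> cnbhd V E y" if "y \<in> ?Y - {z}" for y
    proof -
      from that consider "y \<in> X - T" | w where "w \<in> T" "y = f w" "w \<noteq> v"
        using new by blast
      then show ?thesis
      proof cases
        case 1
        then show ?thesis
          using isolated[of y v] \<open>v \<in> X\<close> new by (auto simp: mem_cnbhd_iff)
      next
        case 2
        then show ?thesis
          using fX[of w] f_not_adj[of w v] \<open>v \<in> X\<close> by (auto simp: mem_cnbhd_iff)
      qed
    qed
    moreover have "v \<in> cnbhd V E z"
      using new fE sym X \<open>v \<in> X\<close> unfolding irredundant_def by (auto simp: mem_cnbhd_iff)
    ultimately have "v \<in> PN V E z ?Y"
      by (simp add: mem_PN_iff)
    then show ?thesis by blast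
  qed
qed

lemma IR_set_swap_EPN:
  assumes G: "simple_graph V E" and X: "IR_set V E X"
  obtains Y where "IR_set V E Y" "X - Y = {v \<in> X. EPN V E v X \<noteq> {}}"
proof -
  define T where "T = {v \<in> X. EPN V E v X \<noteq> {}}"
  define f where "f v = (SOME w. w \<in> EPN V E v X)" for v
  have irrX: "irredundant V E X"
    using X unfolding IR_set_def by blast
  have "T \<subseteq> X"
    unfolding T_def by blast
  have f: "f v \<in> EPN V E v X" if "v \<in> T" for v
    using that unfolding T_def f_def by (auto intro: someI_ex)
  have "\<not> E v u" if "v \<in> X - T" "u \<in> X" for v u
    using EPN_nonempty_if_adjacent[OF G irrX, of v u] that unfolding T_def by blast
  then have "IR_set V E ((X - T) \<union> f ` T)"
    using irredundant_swap_EPN[OF G irrX \<open>T \<subseteq> X\<close> f]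
      card_swap_EPN[OF finite_if_irredundant[OF G irrX] \<open>T \<subseteq> X\<close> f] X
    unfolding IR_set_def by simp
  moreover have "f v \<notin> X" if "v \<in> T" for v
    using f[OF that] by (simp add: mem_EPN_iff)
  then have "X - ((X - T) \<union> f ` T) = T"
    using \<open>T \<subseteq> X\<close> by blast
  ultimately show ?thesis
    using that unfolding T_def by blast
qed

theorem corollary4p4:
  fixes V :: "'a set" and E :: "'a \<Rightarrow> 'a \<Rightarrow> bool" and k :: nat and X :: "'a set"
  assumes "simple_graph V E"
    and "graph_connected (IR_graph_vertices V E) (IR_graph_adj E)"
    and "k \<ge> 3"
    and "IR_set V E X"
    and "(\<exists>S \<subseteq> X. card S = k \<and> (\<forall>v\<in>S. \<exists>u\<in>X. E v u))
       \<or> (\<exists>S \<subseteq> X. card S = k \<and> (\<forall>v\<in>S. EPN V E v X \<noteq> {}))"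
  shows "graph_diam (IR_graph_vertices V E) (IR_graph_adj E) \<ge> k"
proof -
  let ?W = "IR_graph_vertices V E"
  have irrX: "irredundant V E X"
    using assms(4) unfolding IR_set_def by blast
  have "\<forall>v \<in> X. (\<exists>u \<in> X. E v u) \<longrightarrow> EPN V E v X \<noteq> {}"
    using EPN_nonempty_if_adjacent[OF assms(1) irrX] by blast
  with assms(5) have "\<exists>S. S \<subseteq> {v \<in> X. EPN V E v X \<noteq> {}} \<and> card S = k"
    by (auto 0 4)
  then obtain S where S: "S \<subseteq> {v \<in> X. EPN V E v X \<noteq> {}}" "card S = k"
    by blast
  obtain Y where Y: "IR_set V E Y" "X - Y = {v \<in> X. EPN V E v X \<noteq> {}}"
    using IR_set_swap_EPN[OF assms(1,4)] .
  have "X \<in> ?W" "Y \<in> ?W"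
    using assms(4) Y(1) unfolding IR_graph_vertices_def by auto
  have "finite (X - Y)"
    using finite_if_irredundant[OF assms(1) irrX] by blast
  then have "k \<le> card (X - Y)"
    using card_mono S Y(2) by metis
  also have "\<dots> \<le> graph_dist ?W (IR_graph_adj E) X Y"
    using card_Diff_le_graph_dist[OF assms(2) \<open>X \<in> ?W\<close> \<open>Y \<in> ?W\<close>] .
  also have "\<dots> \<le> graph_diam ?W (IR_graph_adj E)"
    using graph_dist_le_graph_diam[OF finite_IR_graph_vertices \<open>X \<in> ?W\<close> \<open>Y \<in> ?W\<close>] assms(1)
    unfolding simple_graph_def by simp
  finally show ?thesis .
qed

end
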